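(* Let $p_1, p_2, \ldots, p_m$ ($m \geq 1$) be distinct primes and $n = p_1 p_2 \cdots p_m$. Then the non-nilradical graph $\Omega(\mathbb{Z}_n)$ is very cost effective.
   Context: $\mathbb{Z}_n$ is the ring of residue classes modulo $n$. The non-nilradical graph $\Omega(\mathbb{Z}_n)$ has as vertices the non-nilpotent zero-divisors of $\mathbb{Z}_n$, two distinct vertices being adjacent iff their product is $0$. For a graph $G=(V,E)$ and $S\subseteq V$, a vertex $v\in S$ is very cost effective if $|N(v)\cap S| < |N(v)\cap (V\setminus S)|$; $S$ is very cost effective if every vertex of $S$ is. A bipartition $\{S, V\setminus S\}$ is very cost effective if both parts are very cost effective, and $G$ is very cost effective if it has a very cost effective bipartition. *)

theory Defs
  imports "HOL-Computational_Algebra.Primes"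
begin

definition zn_carrier :: "nat \<Rightarrow> nat set" where
  "zn_carrier n = {0..<n}"

definition zn_zero_divisor :: "nat \<Rightarrow> nat \<Rightarrow> bool" where
  "zn_zero_divisor n x \<longleftrightarrow> x \<in> zn_carrier n \<and>
     (\<exists>y \<in> zn_carrier n. y \<noteq> 0 \<and> (x * y) mod n = 0)"

definition zn_nilpotent :: "nat \<Rightarrow> nat \<Rightarrow> bool" where
  "zn_nilpotent n x \<longleftrightarrow> x \<in> zn_carrier n \<and> (\<exists>k::nat. k \<ge> 1 \<and> (x ^ k) mod n = 0)"

definition Omega_vertices :: "nat \<Rightarrow> nat set" where
  "Omega_vertices n = {x \<in> zn_carrier n. zn_zero_divisor n x \<and> \<not> zn_nilpotent n x}"

definition Omega_adj :: "nat \<Rightarrow> nat \<Rightarrow> nat \<Rightarrow> bool" where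
  "Omega_adj n x y \<longleftrightarrow> x \<noteq> y \<and> (x * y) mod n = 0"

definition nbhd :: "'a set \<Rightarrow> ('a \<Rightarrow> 'a \<Rightarrow> bool) \<Rightarrow> 'a \<Rightarrow> 'a set" where
  "nbhd V adj v = {u \<in> V. u \<noteq> v \<and> adj v u}"

definition very_cost_effective_vertex ::
  "'a set \<Rightarrow> ('a \<Rightarrow> 'a \<Rightarrow> bool) \<Rightarrow> 'a set \<Rightarrow> 'a \<Rightarrow> bool" where
  "very_cost_effective_vertex V adj S v \<longleftrightarrow>
     card (nbhd V adj v \<inter> S) < card (nbhd V adj v \<inter> (V - S))"

definition very_cost_effective_set ::
  "'a set \<Rightarrow> ('a \<Rightarrow> 'a \<Rightarrow> bool) \<Rightarrow> 'a set \<Rightarrow> bool" where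
  "very_cost_effective_set V adj S \<longleftrightarrow>
     S \<subseteq> V \<and> (\<forall>v \<in> S. very_cost_effective_vertex V adj S v)"

definition very_cost_effective_bipartition ::
  "'a set \<Rightarrow> ('a \<Rightarrow> 'a \<Rightarrow> bool) \<Rightarrow> 'a set \<Rightarrow> bool" where
  "very_cost_effective_bipartition V adj S \<longleftrightarrow>
     S \<subseteq> V \<and> very_cost_effective_set V adj S \<and> very_cost_effective_set V adj (V - S)"

definition very_cost_effective_graph ::
  "'a set \<Rightarrow> ('a \<Rightarrow> 'a \<Rightarrow> bool) \<Rightarrow> bool" where
  "very_cost_effective_graph V adj \<longleftrightarrow> (\<exists>S. very_cost_effective_bipartition V adj S)"

end

theory Submission
  imports Defs "HOL-Computational_Algebra.Squarefree" "HOL-Number_Theory.Cong"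
begin

text \<open>For squarefree \<open>n\<close> the only nilpotent residue is \<open>0\<close>, so the vertices of \<open>\<Omega>(\<int>\<^sub>n)\<close>
  are the nonzero zero-divisors. Fix a prime \<open>p\<close> dividing \<open>n\<close> and let \<open>S\<close> consist of the
  vertices divisible by \<open>p\<close>. A vertex outside \<open>S\<close> has no neighbour outside \<open>S\<close>, since \<open>p\<close>
  would divide one of the two factors, while each of its annihilators lies in \<open>S\<close>. For a vertex
  \<open>x \<in> S\<close> put \<open>q = n / p\<close>; then \<open>n\<close> divides \<open>x q\<close> and \<open>p\<close> does not divide \<open>q\<close>, so the
  translation \<open>y \<mapsto> y + q mod n\<close> maps the neighbours of \<open>x\<close> in \<open>S\<close> injectively to neighbours
  outside \<open>S\<close> and misses the neighbour \<open>q\<close>, the image of \<open>0\<close>.\<close>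

lemma squarefree_dvd_power_imp_dvd:
  fixes n x :: "'a :: factorial_semiring"
  assumes "squarefree n" "n dvd x ^ k" "k > 0"
  shows "n dvd x"
proof (cases "x = 0")
  case False
  have "n \<noteq> 0" using assms(1) by auto
  then show ?thesis
  proof (rule multiplicity_le_imp_dvd)
    fix p :: 'a assume p: "prime p"
    show "multiplicity p n \<le> multiplicity p x"
    proof (cases "p dvd n")
      case True
      then have "p dvd x" using assms(2) p by (blast intro: prime_dvd_power dvd_trans)
      then have "multiplicity p x \<ge> 1"
        using False p by (simp add: Suc_le_eq prime_multiplicity_gt_zero_iff)
      moreover have "multiplicity p n \<le> 1"
        using assms(1) \<open>n \<noteq> 0\<close> p squarefree_factorial_semiring'' by blast
      ultimately show ?thesis by linarith
    qed (simp add: not_dvd_imp_multiplicity_0)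
  qed
qed simp

lemma squarefree_prod_list_distinct_primes:
  fixes ps :: "'a :: factorial_semiring_gcd list"
  assumes "distinct ps" "\<forall>p \<in> set ps. prime p"
  shows "squarefree (prod_list ps)"
proof -
  have "prod_list ps = prod id (set ps)"
    using assms(1) by (simp add: prod.distinct_set_conv_list)
  also have "squarefree \<dots>"
    using assms(2) by (intro squarefree_prod_coprime) (auto intro: primes_coprime squarefree_prime)
  finally show ?thesis .
qed

lemma zn_nilpotent_squarefree_iff:
  assumes "squarefree n"
  shows "zn_nilpotent n x \<longleftrightarrow> x = 0"
proof
  assume "zn_nilpotent n x"
  then obtain k where "x < n" "k \<ge> 1" "n dvd x ^ k"
    unfolding zn_nilpotent_def zn_carrier_def by (auto simp: dvd_eq_mod_eq_0)
  then have "n dvd x" using squarefree_dvd_power_imp_dvd[OF assms] by simp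
  then show "x = 0" using \<open>x < n\<close> by (auto dest: nat_dvd_not_less)
next
  assume "x = 0"
  moreover have "n > 0" using assms by (auto intro: Nat.gr0I)
  ultimately show "zn_nilpotent n x"
    unfolding zn_nilpotent_def zn_carrier_def by (auto intro: exI[of _ 1])
qed

lemma Omega_vertices_squarefree_iff:
  assumes "squarefree n"
  shows "x \<in> Omega_vertices n \<longleftrightarrow> 0 < x \<and> x < n \<and> (\<exists>y. 0 < y \<and> y < n \<and> n dvd x * y)"
  unfolding Omega_vertices_def zn_zero_divisor_def zn_carrier_def
    zn_nilpotent_squarefree_iff[OF assms]
  by (auto simp: dvd_eq_mod_eq_0)

lemma nbhd_Omega:
  "nbhd (Omega_vertices n) (Omega_adj n) x = {u \<in> Omega_vertices n. u \<noteq> x \<and> n dvd x * u}"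
  unfolding nbhd_def Omega_adj_def by (auto simp: dvd_eq_mod_eq_0)

lemma very_cost_effective_vertex_multiple:
  fixes n p x :: nat
  assumes sf: "squarefree n" and p: "prime p" "p dvd n"
    and x: "x \<in> Omega_vertices n" "p dvd x"
  defines "S \<equiv> {v \<in> Omega_vertices n. p dvd v}"
  shows "very_cost_effective_vertex (Omega_vertices n) (Omega_adj n) S x"
proof -
  define V where "V = Omega_vertices n"
  define N where "N = nbhd V (Omega_adj n) x"
  define q where "q = n div p"
  define shift where "shift y = (y + q) mod n" for y
  have n: "n = p * q" using p(2) by (simp add: q_def)
  have "\<not> p dvd q"
  proof
    assume "p dvd q"
    then have "p ^ 2 dvd n" by (auto simp: n power2_eq_square)
    then show False using squarefreeD[OF sf] p(1) not_prime_unit by blast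
  qed
  have "n dvd x * q" using x(2) by (auto simp: n)
  have x_pos: "0 < x" and "x < n" using x(1) sf by (auto simp: Omega_vertices_squarefree_iff)
  have V_iff: "y \<in> V \<longleftrightarrow> 0 < y \<and> y < n \<and> (\<exists>w. 0 < w \<and> w < n \<and> n dvd y * w)" for y
    unfolding V_def using sf by (rule Omega_vertices_squarefree_iff)
  have N_iff: "y \<in> N \<longleftrightarrow> y \<in> V \<and> y \<noteq> x \<and> n dvd x * y" for y
    unfolding N_def V_def nbhd_Omega by simp
  have inj: "inj_on shift {..<n}"
    by (rule inj_onI) (auto simp: shift_def cong_add_rcancel_nat[unfolded cong_def])
  have shift_into: "shift y \<in> N \<inter> (V - S)" if "y \<in> N \<inter> S" for y
  proof -
    from that have "p dvd y" "n dvd x * y" by (auto simp: S_def N_iff)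
    have "\<not> p dvd shift y"
      using \<open>p dvd y\<close> \<open>\<not> p dvd q\<close> p(2) by (simp add: shift_def dvd_mod_iff dvd_add_right_iff)
    moreover have "n dvd x * shift y"
    proof -
      have "n dvd x * (y + q)"
        using \<open>n dvd x * y\<close> \<open>n dvd x * q\<close> by (simp add: distrib_left)
      then show ?thesis by (simp add: shift_def dvd_eq_mod_eq_0 mod_mult_right_eq)
    qed
    moreover have "shift y < n" using x_pos \<open>x < n\<close> by (simp add: shift_def)
    ultimately have "shift y \<in> V"
      using x_pos \<open>x < n\<close> by (auto simp: V_iff mult.commute intro!: exI[of _ x] Nat.gr0I)
    then show ?thesis
      using \<open>\<not> p dvd shift y\<close> \<open>n dvd x * shift y\<close> x(2) by (auto simp: N_iff S_def V_def)
  qed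
  have "0 < q" "q < n" using n prime_gt_1_nat[OF p(1)] sf by (auto intro: Nat.gr0I)
  have "q \<in> N \<inter> (V - S)"
  proof -
    have "q \<in> V"
      using \<open>0 < q\<close> \<open>q < n\<close> x_pos \<open>x < n\<close> \<open>n dvd x * q\<close> by (auto simp: V_iff mult.commute)
    then show ?thesis
      using \<open>\<not> p dvd q\<close> \<open>n dvd x * q\<close> x(2) by (auto simp: N_iff S_def V_def)
  qed
  moreover have "q \<notin> shift ` (N \<inter> S)"
  proof
    assume "q \<in> shift ` (N \<inter> S)"
    then obtain y where "y \<in> N" "shift y = shift 0"
      using \<open>q < n\<close> by (auto simp: shift_def)
    moreover have "0 < y" "y < n" using \<open>y \<in> N\<close> by (auto simp: N_iff V_iff)
    ultimately show False using inj_onD[OF inj, of y 0] by auto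
  qed
  ultimately have "shift ` (N \<inter> S) \<subset> N \<inter> (V - S)" using shift_into by blast
  moreover have "finite (N \<inter> (V - S))"
    by (rule finite_subset[of _ "{..<n}"]) (auto simp: N_iff V_iff)
  ultimately have "card (shift ` (N \<inter> S)) < card (N \<inter> (V - S))" by (rule psubset_card_mono[rotated])
  moreover have "inj_on shift (N \<inter> S)" by (rule inj_on_subset[OF inj]) (auto simp: N_iff V_iff)
  ultimately show ?thesis
    by (simp add: very_cost_effective_vertex_def card_image N_def V_def)
qed

lemma very_cost_effective_vertex_non_multiple:
  fixes n p x :: nat
  assumes sf: "squarefree n" and p: "prime p" "p dvd n"
    and x: "x \<in> Omega_vertices n" "\<not> p dvd x"
  defines "S \<equiv> {v \<in> Omega_vertices n. p dvd v}"
  shows "very_cost_effective_vertex (Omega_vertices n) (Omega_adj n) (Omega_vertices n - S) x"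
proof -
  define V where "V = Omega_vertices n"
  define N where "N = nbhd V (Omega_adj n) x"
  have V_iff: "y \<in> V \<longleftrightarrow> 0 < y \<and> y < n \<and> (\<exists>w. 0 < w \<and> w < n \<and> n dvd y * w)" for y
    unfolding V_def using sf by (rule Omega_vertices_squarefree_iff)
  have N_iff: "y \<in> N \<longleftrightarrow> y \<in> V \<and> y \<noteq> x \<and> n dvd x * y" for y
    unfolding N_def V_def nbhd_Omega by simp
  have p_dvd_neighbour: "p dvd y" if "n dvd x * y" for y
    using that p x(2) by (meson dvd_trans prime_dvd_mult_iff)
  obtain z where "0 < z" "z < n" "n dvd x * z"
    using x(1) by (auto simp: V_iff V_def[symmetric])
  then have "z \<in> N \<inter> S"
    using x p_dvd_neighbour[of z] by (auto simp: N_iff V_iff S_def V_def[symmetric] mult.commute)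
  moreover have "finite (N \<inter> S)"
    by (rule finite_subset[of _ "{..<n}"]) (auto simp: N_iff V_iff)
  ultimately have "card (N \<inter> S) > 0" by (auto simp: card_gt_0_iff)
  moreover have "N \<inter> (V - S) = {}"
    using p_dvd_neighbour by (auto simp: N_iff S_def V_def)
  moreover have "V - (V - S) = S" by (auto simp: S_def V_def)
  ultimately show ?thesis
    by (simp add: very_cost_effective_vertex_def N_def V_def)
qed

theorem very_cost_effective_graph_Omega_squarefree:
  fixes n :: nat
  assumes sf: "squarefree n"
  shows "very_cost_effective_graph (Omega_vertices n) (Omega_adj n)"
proof (cases "n = 1")
  case True
  then have "very_cost_effective_bipartition (Omega_vertices n) (Omega_adj n) {}"
    using sf by (auto simp: very_cost_effective_bipartition_def very_cost_effective_set_def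
        Omega_vertices_squarefree_iff)
  then show ?thesis unfolding very_cost_effective_graph_def by blast
next
  case False
  then obtain p :: nat where p: "prime p" "p dvd n" using prime_factor_nat by blast
  define S where "S = {v \<in> Omega_vertices n. p dvd v}"
  have "very_cost_effective_bipartition (Omega_vertices n) (Omega_adj n) S"
    unfolding very_cost_effective_bipartition_def very_cost_effective_set_def S_def
    using very_cost_effective_vertex_multiple[OF sf p] very_cost_effective_vertex_non_multiple[OF sf p]
    by auto
  then show ?thesis unfolding very_cost_effective_graph_def by blast
qed

theorem mainTheorem7:
  fixes ps :: "nat list" and n :: nat
  assumes "m \<ge> 1" and "length ps = m" and "distinct ps" and "\<forall>p \<in> set ps. prime p"
    and "n = prod_list ps"
  shows "very_cost_effective_graph (Omega_vertices n) (Omega_adj n)"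
proof -
  have "squarefree n"
    using assms(3-5) by (simp add: squarefree_prod_list_distinct_primes)
  then show ?thesis by (rule very_cost_effective_graph_Omega_squarefree)
qed

end
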